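(* Let $\mathcal{A}$ be a finite set of positive integers, let $w \leqslant z$ be real numbers, let $0 < m_0 \leqslant 1$, and let $m_1, m_2$ be real numbers with $(m_1, m_2) \in \mathcal{U}$. Then $$ S(\mathcal{A}, z) \geqslant S(\mathcal{A}, w) - \frac{m_0m_1 + m_0m_2 + m_1m_2 - m_0 - m_1 - m_2 + 1}{m_0m_1m_2} \sum_{w \leqslant p_1 < z} S(\mathcal{A}_{p_1}, w) + \frac{2(m_0 + m_1 + m_2 - 3)}{m_0m_1m_2} \sum_{w \leqslant p_2 < p_1 < z} S(\mathcal{A}_{p_1p_2}, w) - \frac{6}{m_0m_1m_2} \sum_{w \leqslant p_3 < p_2 < p_1 < z} S(\mathcal{A}_{p_1p_2p_3}, w). $$
   Context: Throughout, $p, p_1, p_2, \dots$ denote prime numbers. For a finite set $\mathcal{A}$ of positive integers and a positive integer $d$, $\mathcal{A}_d = \{a : ad \in \mathcal{A}\}$. For real $z$, $S(\mathcal{A}, z)$ denotes the number of $a \in \mathcal{A}$ having no prime factor less than $z$. Let $T = (0,1] \cup [2,3] \cup [4,5] \cup \cdots$, i.e. $T$ is the union of $(0,1]$ and the intervals $[k-1,k]$ over all odd integers $k \geqslant 3$, and let $\mathcal{U} = \{(x_1, x_2) : x_1, x_2 \in T,\ |x_1 - x_2| \leqslant 1\}$. *)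

theory Defs
  imports "HOL-Computational_Algebra.Primes" Complex_Main
begin

definition sift :: "nat set \<Rightarrow> real \<Rightarrow> nat" where
  "sift A z = card {a \<in> A. \<forall>p. prime p \<and> real p < z \<longrightarrow> \<not> p dvd a}"

definition subseq_d :: "nat set \<Rightarrow> nat \<Rightarrow> nat set" where
  "subseq_d A d = {a. a * d \<in> A}"

definition T_set :: "real set" where
  "T_set = {0<..1} \<union> (\<Union>k\<in>{k::nat. odd k \<and> k \<ge> 3}. {real k - 1 .. real k})"

definition U_set :: "(real \<times> real) set" where
  "U_set = {(x1, x2). x1 \<in> T_set \<and> x2 \<in> T_set \<and> \<bar>x1 - x2\<bar> \<le> 1}"

definition primes_between :: "real \<Rightarrow> real \<Rightarrow> nat set" where
  "primes_between w z = {p. prime p \<and> w \<le> real p \<and> real p < z}"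

end

theory Submission
  imports Defs
begin

text \<open>Let \<open>R\<close> be the set of \<open>a \<in> A\<close> without prime factors below \<open>w\<close>, and for \<open>a \<in> R\<close> let
  \<open>k(a)\<close> be the number of primes \<open>p \<in> [w, z)\<close> dividing \<open>a\<close>. Counting each \<open>a \<in> R\<close> once for every
  decreasing tuple of such primes dividing it, the three prime sums become the sums over \<open>R\<close> of
  \<open>k\<close>, \<open>k choose 2\<close> and \<open>k choose 3\<close>, while \<open>S(A, z)\<close> counts the \<open>a \<in> R\<close> with \<open>k(a) = 0\<close>.
  So it suffices to bound the resulting weight of each \<open>a\<close> by \<open>[k(a) = 0]\<close>. As a cubic in \<open>k\<close>
  the weight is \<open>-(k - m0)(k - m1)(k - m2) / (m0 m1 m2)\<close>, which is \<open>\<le> 0\<close> for \<open>k \<ge> 1 \<ge> m0\<close>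
  because the definition of \<open>U_set\<close> leaves no integer strictly between \<open>m1\<close> and \<open>m2\<close>.\<close>

definition rough :: "nat set \<Rightarrow> real \<Rightarrow> nat set" where
  "rough A w = {a \<in> A. \<forall>p. prime p \<and> real p < w \<longrightarrow> \<not> p dvd a}"

lemma sift_eq_card_rough: "sift A w = card (rough A w)"
  by (simp add: sift_def rough_def)

lemma finite_rough: "finite A \<Longrightarrow> finite (rough A w)"
  by (simp add: rough_def)

lemma finite_primes_between: "finite (primes_between w z)"
proof (rule finite_subset)
  show "primes_between w z \<subseteq> {..nat \<lceil>z\<rceil>}"
    by (auto simp: primes_between_def le_nat_iff) linarith
qed simp

lemma rough_eq_filter_primes_between:
  assumes "w \<le> z"
  shows "rough A z = {a \<in> rough A w. \<forall>p\<in>primes_between w z. \<not> p dvd a}"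
  using assms by (auto simp: rough_def primes_between_def) (meson not_le)

lemma sift_subseq_d:
  fixes d :: nat
  assumes "d > 0" and "\<forall>p. prime p \<and> p dvd d \<longrightarrow> w \<le> real p"
  shows "sift (subseq_d A d) w = card {a \<in> rough A w. d dvd a}"
proof -
  have "inj_on (\<lambda>b. b * d) (rough (subseq_d A d) w)"
    using \<open>d > 0\<close> by (auto simp: inj_on_def)
  moreover have "(\<lambda>b. b * d) ` rough (subseq_d A d) w = {a \<in> rough A w. d dvd a}"
  proof (intro equalityI subsetI)
    fix a assume "a \<in> (\<lambda>b. b * d) ` rough (subseq_d A d) w"
    then obtain b where a: "a = b * d" and b: "b \<in> rough (subseq_d A d) w" by blast
    have "\<not> p dvd b * d" if "prime p" "real p < w" for p
      using that b assms(2) by (auto simp: rough_def prime_dvd_mult_iff)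
    with a b show "a \<in> {a \<in> rough A w. d dvd a}"
      by (simp add: rough_def subseq_d_def)
  next
    fix a assume a: "a \<in> {a \<in> rough A w. d dvd a}"
    then obtain b where "a = b * d" by (metis dvd_def mult.commute mem_Collect_eq)
    with a have "b \<in> rough (subseq_d A d) w"
      by (auto simp: rough_def subseq_d_def)
    with \<open>a = b * d\<close> show "a \<in> (\<lambda>b. b * d) ` rough (subseq_d A d) w" by blast
  qed
  ultimately show ?thesis
    by (metis card_image sift_eq_card_rough)
qed

lemma prod_primes_dvd_iff:
  fixes D :: "nat set"
  assumes "finite D" and "\<forall>p\<in>D. prime p"
  shows "\<Prod>D dvd a \<longleftrightarrow> (\<forall>p\<in>D. p dvd a)"
  using assms
proof (induction D rule: finite_induct)
  case (insert q D)
  have "coprime q (\<Prod>D)"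
    using insert by (metis insert_iff prod_coprime_right primes_coprime)
  then show ?case
    using insert by (auto intro: divides_mult dvd_mult_left dvd_mult_right)
qed simp

lemma sift_subseq_prod_primes:
  fixes D :: "nat set"
  assumes "finite D" and "\<forall>p\<in>D. prime p \<and> w \<le> real p"
  shows "sift (subseq_d A (\<Prod>D)) w = card {a \<in> rough A w. \<forall>p\<in>D. p dvd a}"
proof -
  have "\<Prod>D > 0"
    using assms by (auto intro: prod_pos prime_gt_0_nat)
  moreover have "w \<le> real q" if "prime q" "q dvd \<Prod>D" for q
    using that assms by (auto simp: prime_dvd_prod_iff dest: primes_dvd_imp_eq)
  ultimately show ?thesis
    using assms by (simp add: sift_subseq_d prod_primes_dvd_iff)
qed

lemma sum_of_bool_less_pairs:
  fixes S :: "'a::linorder set"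
  assumes "finite S"
  shows "(\<Sum>x\<in>S. \<Sum>y\<in>{y\<in>S. y < x}. of_bool (Q x \<and> Q y)) = card {x\<in>S. Q x} choose 2"
  using assms
proof (induction S rule: finite_linorder_max_induct)
  case (insert b S)
  then have "b \<notin> S" and "{y \<in> insert b S. y < b} = S"
    and "\<And>x. x \<in> S \<Longrightarrow> {y \<in> insert b S. y < x} = {y \<in> S. y < x}"
    by auto
  moreover have "{x \<in> insert b S. Q x} = (if Q b then insert b {x \<in> S. Q x} else {x \<in> S. Q x})"
    by auto
  ultimately show ?case
    using insert by (simp add: numeral_2_eq_2 Collect_conj_eq Int_commute)
qed simp

lemma sum_of_bool_less_triples:
  fixes S :: "'a::linorder set"
  assumes "finite S"
  shows "(\<Sum>x\<in>S. \<Sum>y\<in>{y\<in>S. y < x}. \<Sum>z\<in>{z\<in>S. z < y}. of_bool (Q x \<and> Q y \<and> Q z))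
    = card {x\<in>S. Q x} choose 3"
  using assms
proof (induction S rule: finite_linorder_max_induct)
  case (insert b S)
  then have "b \<notin> S" and "{y \<in> insert b S. y < b} = S"
    and "\<And>x. x \<in> S \<Longrightarrow> {y \<in> insert b S. y < x} = {y \<in> S. y < x}"
    by auto
  moreover have "{x \<in> insert b S. Q x} = (if Q b then insert b {x \<in> S. Q x} else {x \<in> S. Q x})"
    by auto
  moreover have "(\<Sum>y\<in>S. \<Sum>z\<in>{z\<in>S. z < y}. of_bool (Q b \<and> Q y \<and> Q z))
      = of_bool (Q b) * (card {x\<in>S. Q x} choose 2)"
    using sum_of_bool_less_pairs[OF insert.hyps(1), of Q]
    by (simp add: sum_distrib_left)
  ultimately show ?case
    using insert by (simp add: numeral_3_eq_3 numeral_2_eq_2)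
qed simp

lemma card_filter_eq_sum_of_bool: "finite S \<Longrightarrow> card {x \<in> S. P x} = (\<Sum>x\<in>S. of_bool (P x))"
  by (simp add: Collect_conj_eq)

lemma sum_sift_subseq_primes:
  assumes "finite A"
  shows "(\<Sum>p\<in>primes_between w z. sift (subseq_d A p) w)
    = (\<Sum>a\<in>rough A w. card {p \<in> primes_between w z. p dvd a})"
proof -
  have "(\<Sum>p\<in>primes_between w z. sift (subseq_d A p) w)
      = (\<Sum>p\<in>primes_between w z. \<Sum>a\<in>rough A w. of_bool (p dvd a))"
    using sift_subseq_prod_primes[of "{p}" w A for p] finite_rough[OF assms]
    by (intro sum.cong) (simp_all add: primes_between_def card_filter_eq_sum_of_bool)
  also have "\<dots> = (\<Sum>a\<in>rough A w. \<Sum>p\<in>primes_between w z. of_bool (p dvd a))"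
    by (rule sum.swap)
  finally show ?thesis
    by (simp add: card_filter_eq_sum_of_bool finite_primes_between)
qed

lemma sum_sift_subseq_pairs:
  assumes "finite A"
  shows "(\<Sum>p1\<in>primes_between w z. \<Sum>p2\<in>{p \<in> primes_between w z. p < p1}.
        sift (subseq_d A (p1 * p2)) w)
    = (\<Sum>a\<in>rough A w. card {p \<in> primes_between w z. p dvd a} choose 2)"
proof -
  have "(\<Sum>p1\<in>primes_between w z. \<Sum>p2\<in>{p \<in> primes_between w z. p < p1}.
        sift (subseq_d A (p1 * p2)) w)
    = (\<Sum>p1\<in>primes_between w z. \<Sum>p2\<in>{p \<in> primes_between w z. p < p1}.
        \<Sum>a\<in>rough A w. of_bool (p1 dvd a \<and> p2 dvd a))"
  proof (intro sum.cong refl)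
    fix p1 p2 assume "p1 \<in> primes_between w z" "p2 \<in> {p \<in> primes_between w z. p < p1}"
    then have "p1 * p2 = \<Prod>{p1, p2}" and "\<forall>p\<in>{p1, p2}. prime p \<and> w \<le> real p"
      by (auto simp: primes_between_def)
    then show "sift (subseq_d A (p1 * p2)) w = (\<Sum>a\<in>rough A w. of_bool (p1 dvd a \<and> p2 dvd a))"
      using finite_rough[OF assms] by (simp add: sift_subseq_prod_primes card_filter_eq_sum_of_bool)
  qed
  also have "\<dots> = (\<Sum>a\<in>rough A w. \<Sum>p1\<in>primes_between w z. \<Sum>p2\<in>{p \<in> primes_between w z. p < p1}.
        of_bool (p1 dvd a \<and> p2 dvd a))"
    by (simp only: sum.swap[of _ _ "rough A w"])
  finally show ?thesis
    by (simp only: sum_of_bool_less_pairs finite_primes_between)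
qed

lemma sum_sift_subseq_triples:
  assumes "finite A"
  shows "(\<Sum>p1\<in>primes_between w z. \<Sum>p2\<in>{p \<in> primes_between w z. p < p1}.
        \<Sum>p3\<in>{p \<in> primes_between w z. p < p2}. sift (subseq_d A (p1 * p2 * p3)) w)
    = (\<Sum>a\<in>rough A w. card {p \<in> primes_between w z. p dvd a} choose 3)"
proof -
  have "(\<Sum>p1\<in>primes_between w z. \<Sum>p2\<in>{p \<in> primes_between w z. p < p1}.
        \<Sum>p3\<in>{p \<in> primes_between w z. p < p2}. sift (subseq_d A (p1 * p2 * p3)) w)
    = (\<Sum>p1\<in>primes_between w z. \<Sum>p2\<in>{p \<in> primes_between w z. p < p1}.
        \<Sum>p3\<in>{p \<in> primes_between w z. p < p2}.
        \<Sum>a\<in>rough A w. of_bool (p1 dvd a \<and> p2 dvd a \<and> p3 dvd a))"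
  proof (intro sum.cong refl)
    fix p1 p2 p3 assume "p1 \<in> primes_between w z" "p2 \<in> {p \<in> primes_between w z. p < p1}"
      "p3 \<in> {p \<in> primes_between w z. p < p2}"
    then have "p1 * p2 * p3 = \<Prod>{p1, p2, p3}" and "\<forall>p\<in>{p1, p2, p3}. prime p \<and> w \<le> real p"
      by (auto simp: primes_between_def)
    then show "sift (subseq_d A (p1 * p2 * p3)) w
        = (\<Sum>a\<in>rough A w. of_bool (p1 dvd a \<and> p2 dvd a \<and> p3 dvd a))"
      using finite_rough[OF assms] by (simp add: sift_subseq_prod_primes card_filter_eq_sum_of_bool)
  qed
  also have "\<dots> = (\<Sum>a\<in>rough A w. \<Sum>p1\<in>primes_between w z. \<Sum>p2\<in>{p \<in> primes_between w z. p < p1}.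
        \<Sum>p3\<in>{p \<in> primes_between w z. p < p2}. of_bool (p1 dvd a \<and> p2 dvd a \<and> p3 dvd a))"
    by (simp only: sum.swap[of _ _ "rough A w"])
  finally show ?thesis
    by (simp only: sum_of_bool_less_triples finite_primes_between)
qed

lemma T_set_odd_bracket:
  assumes "x \<in> T_set"
  obtains j :: nat where "odd j" "real j - 1 \<le> x" "x \<le> real j" "0 < x"
proof -
  from assms consider "x \<in> {0<..1}" | j :: nat where "odd j" "j \<ge> 3" "x \<in> {real j - 1..real j}"
    unfolding T_set_def by blast
  then show thesis
  proof cases
    case 1
    then show thesis by (intro that[of 1]) auto
  next
    case 2
    then show thesis by (intro that[of j]) auto
  qed
qed

lemma U_set_no_integer_between:
  assumes "(x1, x2) \<in> U_set"
  shows "\<not> (x1 < real k \<and> real k < x2)"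
proof
  assume between: "x1 < real k \<and> real k < x2"
  from assms have "x1 \<in> T_set" "x2 \<in> T_set" "x2 \<le> x1 + 1"
    by (auto simp: U_set_def)
  then obtain j1 j2 :: nat where j1: "odd j1" "real j1 - 1 \<le> x1" "x1 \<le> real j1"
    and j2: "odd j2" "real j2 - 1 \<le> x2" "x2 \<le> real j2"
    by (metis T_set_odd_bracket)
  have "k = j1"
    using between j1 \<open>x2 \<le> x1 + 1\<close> by linarith
  then have "j1 < j2"
    using between j2 by linarith
  with j1 j2 have "j1 + 2 \<le> j2"
    by presburger
  then show False
    using between j2 \<open>k = j1\<close> \<open>x2 \<le> x1 + 1\<close> by linarith
qed

lemma U_set_mult_nonneg:
  assumes "(x1, x2) \<in> U_set"
  shows "0 \<le> (real k - x1) * (real k - x2)"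
proof -
  have "(x2, x1) \<in> U_set"
    using assms by (auto simp: U_set_def)
  then show ?thesis
    using U_set_no_integer_between[OF assms] U_set_no_integer_between[of x2 x1 k]
    by (smt (verit) mult_nonneg_nonneg mult_nonpos_nonpos)
qed

lemma sieve_cubic_factorization:
  fixes x m0 m1 m2 :: real
  assumes "m0 \<noteq> 0" "m1 \<noteq> 0" "m2 \<noteq> 0"
  shows "1 - (m0*m1 + m0*m2 + m1*m2 - m0 - m1 - m2 + 1) / (m0*m1*m2) * x
      + 2 * (m0 + m1 + m2 - 3) / (m0*m1*m2) * (x * (x - 1) / 2)
      - 6 / (m0*m1*m2) * (x * (x - 1) * (x - 2) / 6)
    = - ((x - m0) * (x - m1) * (x - m2)) / (m0*m1*m2)"
  using assms by (simp add: field_simps)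

lemma sieve_weight_le_indicator:
  fixes m0 m1 m2 :: real and k :: nat
  assumes "0 < m0" "m0 \<le> 1" "(m1, m2) \<in> U_set"
  shows "1 - (m0*m1 + m0*m2 + m1*m2 - m0 - m1 - m2 + 1) / (m0*m1*m2) * real k
      + 2 * (m0 + m1 + m2 - 3) / (m0*m1*m2) * real (k choose 2)
      - 6 / (m0*m1*m2) * real (k choose 3)
    \<le> of_bool (k = 0)"
proof -
  from assms(3) have "0 < m1" "0 < m2"
    by (auto simp: U_set_def elim: T_set_odd_bracket)
  have choose2: "real (k choose 2) = real k * (real k - 1) / 2"
    and choose3: "real (k choose 3) = real k * (real k - 1) * (real k - 2) / 6"
    by (simp_all add: binomial_gbinomial gbinomial_Suc numeral_2_eq_2 numeral_3_eq_3)
  have "1 - (m0*m1 + m0*m2 + m1*m2 - m0 - m1 - m2 + 1) / (m0*m1*m2) * real k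
      + 2 * (m0 + m1 + m2 - 3) / (m0*m1*m2) * real (k choose 2)
      - 6 / (m0*m1*m2) * real (k choose 3)
    = - ((real k - m0) * (real k - m1) * (real k - m2)) / (m0*m1*m2)"
    unfolding choose2 choose3
    using assms(1) \<open>0 < m1\<close> \<open>0 < m2\<close> by (intro sieve_cubic_factorization) simp_all
  also have "\<dots> \<le> of_bool (k = 0)"
  proof (cases "k = 0")
    case True
    then show ?thesis
      using assms(1) \<open>0 < m1\<close> \<open>0 < m2\<close> by simp
  next
    case False
    then have "0 \<le> (real k - m0) * ((real k - m1) * (real k - m2))"
      using assms(2) U_set_mult_nonneg[OF assms(3)] by simp
    then have "0 \<le> (real k - m0) * (real k - m1) * (real k - m2) / (m0*m1*m2)"
      using assms(1) \<open>0 < m1\<close> \<open>0 < m2\<close> by (simp add: mult.assoc)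
    then show ?thesis
      by simp
  qed
  finally show ?thesis .
qed

theorem theorem5:
  fixes A :: "nat set" and w z m0 m1 m2 :: real
  assumes "finite A" and "\<forall>a\<in>A. a > 0"
    and "w \<le> z" and "0 < m0" and "m0 \<le> 1" and "(m1, m2) \<in> U_set"
  shows "real (sift A z) \<ge>
      real (sift A w)
      - (m0*m1 + m0*m2 + m1*m2 - m0 - m1 - m2 + 1) / (m0*m1*m2)
          * (\<Sum>p1\<in>primes_between w z. real (sift (subseq_d A p1) w))
      + 2 * (m0 + m1 + m2 - 3) / (m0*m1*m2)
          * (\<Sum>p1\<in>primes_between w z. \<Sum>p2\<in>{p\<in>primes_between w z. p < p1}.
               real (sift (subseq_d A (p1*p2)) w))
      - 6 / (m0*m1*m2)
          * (\<Sum>p1\<in>primes_between w z. \<Sum>p2\<in>{p\<in>primes_between w z. p < p1}.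
               \<Sum>p3\<in>{p\<in>primes_between w z. p < p2}.
               real (sift (subseq_d A (p1*p2*p3)) w))"
proof -
  define k where "k a = card {p \<in> primes_between w z. p dvd a}" for a
  have "sift A z = card {a \<in> rough A w. k a = 0}"
    using assms(3) finite_primes_between
    by (simp add: sift_eq_card_rough rough_eq_filter_primes_between k_def Ball_def)
  then have sift_z: "real (sift A z) = (\<Sum>a\<in>rough A w. of_bool (k a = 0))"
    using finite_rough[OF assms(1)] by (simp add: card_filter_eq_sum_of_bool)
  have sift_w: "real (sift A w) = (\<Sum>a\<in>rough A w. 1)"
    by (simp add: sift_eq_card_rough)
  have primes: "(\<Sum>p1\<in>primes_between w z. real (sift (subseq_d A p1) w))
      = (\<Sum>a\<in>rough A w. real (k a))"
    using arg_cong[OF sum_sift_subseq_primes[OF assms(1)], of real] by (simp add: k_def)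
  have pairs: "(\<Sum>p1\<in>primes_between w z. \<Sum>p2\<in>{p\<in>primes_between w z. p < p1}.
      real (sift (subseq_d A (p1*p2)) w)) = (\<Sum>a\<in>rough A w. real (k a choose 2))"
    using arg_cong[OF sum_sift_subseq_pairs[OF assms(1)], of real] by (simp add: k_def)
  have triples: "(\<Sum>p1\<in>primes_between w z. \<Sum>p2\<in>{p\<in>primes_between w z. p < p1}.
      \<Sum>p3\<in>{p\<in>primes_between w z. p < p2}. real (sift (subseq_d A (p1*p2*p3)) w))
      = (\<Sum>a\<in>rough A w. real (k a choose 3))"
    using arg_cong[OF sum_sift_subseq_triples[OF assms(1)], of real] by (simp add: k_def)
  have "(\<Sum>a\<in>rough A w. 1 - (m0*m1 + m0*m2 + m1*m2 - m0 - m1 - m2 + 1) / (m0*m1*m2) * real (k a)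
      + 2 * (m0 + m1 + m2 - 3) / (m0*m1*m2) * real (k a choose 2)
      - 6 / (m0*m1*m2) * real (k a choose 3)) \<le> real (sift A z)"
    unfolding sift_z using assms(4-6) by (intro sum_mono sieve_weight_le_indicator)
  then show ?thesis
    unfolding sift_w primes pairs triples
    by (simp add: sum_subtractf sum.distrib sum_distrib_left)
qed

end
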